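(* Let $z,b$ be non-singular complex $r\times r$ matrices. Then $$\bar z\,{}^tz=\bar b\,{}^tb,\qquad {}^tz\,\bar z=b^\ast b,\qquad b\,{}^tz=z\,{}^tb$$ hold if and only if $b=USV^\ast$ and $z=USW\,{}^tV$ for some positive definite real diagonal matrix $S$ and unitary matrices $U,V,W$ with ${}^tW=W$ and $WS=SW$.
   Context: ${}^tM$ denotes the transpose, $\bar M$ the entrywise complex conjugate, and $M^\ast={}^t\bar M$. *)

theory Defs
  imports "HOL-Analysis.Analysis"
begin

definition mat_cnj :: "complex^'n^'m \<Rightarrow> complex^'n^'m" where
  "mat_cnj A = (\<chi> i j. cnj (A $ i $ j))"

definition mat_adj :: "complex^'n^'m \<Rightarrow> complex^'m^'n" where
  "mat_adj A = transpose (mat_cnj A)"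

definition unitary_mat :: "complex^'n^'n \<Rightarrow> bool" where
  "unitary_mat U \<longleftrightarrow> U ** mat_adj U = mat 1 \<and> mat_adj U ** U = mat 1"

definition pos_real_diag :: "complex^'n^'n \<Rightarrow> bool" where
  "pos_real_diag S \<longleftrightarrow> (\<exists>d :: 'n \<Rightarrow> real. (\<forall>i. d i > 0) \<and>
      S = (\<chi> i j. if i = j then complex_of_real (d i) else 0))"

end

theory Submission
  imports Defs
begin

text \<open>Write the invertible matrix \<open>b\<close> in singular value form \<open>b = U S V\<^sup>*\<close>, using the spectral
  theorem for the Hermitian matrix \<open>b\<^sup>* b\<close> (proved by maximising the Rayleigh quotient on
  invariant subspaces). Every \<open>z\<close> then has the form \<open>z = U S W \<^sup>tV\<close>, with
  \<open>W = S\<^sup>-\<^sup>1 U\<^sup>* z (conj V)\<close>, and in these coordinates the three identities say exactly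
  \<open>(conj W) \<^sup>tW = 1\<close>, \<open>\<^sup>tW S\<^sup>2 (conj W) = S\<^sup>2\<close> and \<open>\<^sup>tW = W\<close>. Hence \<open>W\<close> is a symmetric unitary matrix
  commuting with \<open>S\<^sup>2\<close>, and therefore with the positive diagonal matrix \<open>S\<close>.\<close>

lemma mat_cnj_mult: "mat_cnj (A ** B) = mat_cnj A ** mat_cnj (B::complex^_^_)"
  by (simp add: mat_cnj_def matrix_matrix_mult_def vec_eq_iff)

lemma mat_cnj_mat_cnj [simp]: "mat_cnj (mat_cnj A) = A"
  by (simp add: mat_cnj_def vec_eq_iff)

lemma mat_cnj_mat_1 [simp]: "mat_cnj (mat 1) = mat 1"
  by (simp add: mat_cnj_def mat_def vec_eq_iff)

lemma mat_cnj_transpose: "mat_cnj (transpose A) = transpose (mat_cnj A)"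
  by (simp add: mat_cnj_def transpose_def vec_eq_iff)

lemmas mat_normalize_simps =
  matrix_mul_assoc matrix_transpose_mul mat_cnj_mult mat_cnj_transpose mat_adj_def

lemma matrix_mul_cancel_right_inverse:
  "A ** B = mat 1 \<Longrightarrow> X ** A ** B = (X::'a::semiring_1^'n^'n)"
  by (metis matrix_mul_assoc matrix_mul_rid)

lemma invertible_mult_cancel:
  fixes P Q X Y :: "'a::field^'n^'n"
  assumes "invertible P" and "invertible Q"
  shows "P ** X ** Q = P ** Y ** Q \<longleftrightarrow> X = Y"
proof
  obtain P' Q' where "P' ** P = mat 1" and "Q ** Q' = mat 1"
    using assms unfolding invertible_def by blast
  then have "P' ** (P ** M ** Q) ** Q' = M" for M
    by (metis matrix_mul_assoc matrix_mul_lid matrix_mul_rid)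
  then show "P ** X ** Q = P ** Y ** Q \<Longrightarrow> X = Y"
    by metis
qed simp

lemma conjugate_eq_iff_commute:
  fixes A B X :: "'a::semiring_1^'n^'n"
  assumes "A ** B = mat 1" and "B ** A = mat 1"
  shows "A ** X ** B = X \<longleftrightarrow> A ** X = X ** A"
  using assms by (metis matrix_mul_assoc matrix_mul_rid)

lemma unitary_matD:
  assumes "unitary_mat U"
  shows "mat_adj U ** U = mat 1" "U ** mat_adj U = mat 1"
    "transpose U ** mat_cnj U = mat 1" "mat_cnj U ** transpose U = mat 1"
proof -
  show adj: "mat_adj U ** U = mat 1" "U ** mat_adj U = mat 1"
    using assms by (auto simp: unitary_mat_def)
  show "transpose U ** mat_cnj U = mat 1" "mat_cnj U ** transpose U = mat 1"
    using arg_cong[OF adj(1), of mat_cnj] arg_cong[OF adj(2), of mat_cnj]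
    by (simp_all add: mat_normalize_simps)
qed

lemma unitary_mat_iff_left_inverse: "unitary_mat U \<longleftrightarrow> mat_adj U ** U = mat 1"
  using matrix_left_right_inverse unfolding unitary_mat_def by blast

lemma unitary_mat_invertible:
  assumes "unitary_mat U"
  shows "invertible U" "invertible (mat_adj U)" "invertible (mat_cnj U)" "invertible (transpose U)"
  using unitary_matD[OF assms] unfolding invertible_def by blast+

lemma symmetric_unitary_mat_iff:
  assumes "transpose W = W"
  shows "unitary_mat W \<longleftrightarrow> mat_cnj W ** W = mat 1"
  by (metis assms mat_adj_def mat_cnj_transpose unitary_mat_iff_left_inverse)

definition diag_mat :: "('n \<Rightarrow> real) \<Rightarrow> complex^'n^'n" where
  "diag_mat s = (\<chi> i j. if i = j then complex_of_real (s i) else 0)"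

lemma pos_real_diag_diag_mat: "(\<forall>i. s i > 0) \<Longrightarrow> pos_real_diag (diag_mat s)"
  unfolding pos_real_diag_def diag_mat_def by blast

lemma pos_real_diagE:
  assumes "pos_real_diag S"
  obtains s where "\<forall>i. s i > 0" and "S = diag_mat s"
  using assms unfolding pos_real_diag_def diag_mat_def by blast

lemma transpose_diag_mat [simp]: "transpose (diag_mat s) = diag_mat s"
  by (simp add: diag_mat_def transpose_def vec_eq_iff)

lemma mat_cnj_diag_mat [simp]: "mat_cnj (diag_mat s) = diag_mat s"
  by (simp add: diag_mat_def mat_cnj_def vec_eq_iff)

lemma matrix_mul_diag_mat_right: "(A ** diag_mat s) $ i $ j = A $ i $ j * s j"
  by (simp add: diag_mat_def matrix_matrix_mult_def if_distrib if_distribR cong: if_cong)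

lemma matrix_mul_diag_mat_left: "(diag_mat s ** A) $ i $ j = s i * A $ i $ j"
  by (simp add: diag_mat_def matrix_matrix_mult_def if_distrib if_distribR cong: if_cong)

lemma diag_mat_mult: "diag_mat s ** diag_mat t = diag_mat (\<lambda>i. s i * t i)"
  by (simp add: vec_eq_iff matrix_mul_diag_mat_right) (simp add: diag_mat_def)

lemma diag_mat_1: "diag_mat (\<lambda>_. 1) = mat 1"
  by (simp add: diag_mat_def mat_def vec_eq_iff)

lemma diag_mat_mult_inverse:
  assumes "\<forall>i. s i \<noteq> 0"
  shows "diag_mat s ** diag_mat (\<lambda>i. inverse (s i)) = mat 1"
    "diag_mat (\<lambda>i. inverse (s i)) ** diag_mat s = mat 1"
  using assms by (simp_all add: diag_mat_mult diag_mat_1)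

lemma invertible_diag_mat: "\<forall>i. s i \<noteq> 0 \<Longrightarrow> invertible (diag_mat s)"
  using diag_mat_mult_inverse unfolding invertible_def by blast

lemma commute_diag_mat_iff:
  "A ** diag_mat s = diag_mat s ** A \<longleftrightarrow> (\<forall>i j. A $ i $ j \<noteq> 0 \<longrightarrow> s i = s j)"
  by (auto simp: vec_eq_iff matrix_mul_diag_mat_left matrix_mul_diag_mat_right mult.commute; metis)

lemma commute_diag_mat_square_iff:
  assumes "\<forall>i. s i > 0"
  shows "A ** diag_mat (\<lambda>i. s i * s i) = diag_mat (\<lambda>i. s i * s i) ** A
    \<longleftrightarrow> A ** diag_mat s = diag_mat s ** A"
proof -
  have "s i * s i = s j * s j \<longleftrightarrow> s i = s j" for i j
    using assms by (metis less_imp_le power2_eq_iff_nonneg power2_eq_square)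
  then show ?thesis
    by (simp add: commute_diag_mat_iff)
qed

definition cinner :: "complex^'n \<Rightarrow> complex^'n \<Rightarrow> complex" where
  "cinner x y = (\<Sum>i\<in>UNIV. cnj (x $ i) * y $ i)"

lemma Re_cinner: "Re (cinner x y) = inner x y"
  by (simp add: cinner_def inner_vec_def inner_complex_def)

lemma cinner_self: "cinner x x = complex_of_real ((norm x)\<^sup>2)"
  by (rule complex_eqI) (simp_all add: Re_cinner dot_square_norm, simp add: cinner_def)

lemma cinner_commute: "cinner y x = cnj (cinner x y)"
  by (simp add: cinner_def mult.commute)

lemma cinner_add_right: "cinner e (x + y) = cinner e x + cinner e y"
  by (simp add: cinner_def algebra_simps sum.distrib)

lemma vector_scaleR_complex_component: "(c *\<^sub>R x) $ i = complex_of_real c * (x::complex^'n) $ i"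
  by (simp only: vector_scaleR_component) (simp add: scaleR_conv_of_real)

lemma scaleR_eq_scalar_mult: "c *\<^sub>R (x::complex^'n) = complex_of_real c *s x"
  by (simp add: vec_eq_iff vector_scaleR_complex_component del: vector_scaleR_component)

lemma cinner_scaleR_right: "cinner e (c *\<^sub>R x) = of_real c * cinner e x"
  by (simp add: cinner_def sum_distrib_left vector_scaleR_complex_component mult_ac
      del: vector_scaleR_component)

lemma cinner_scalar_mult_left: "cinner (c *s e) x = cnj c * cinner e x"
  by (simp add: cinner_def sum_distrib_left mult_ac)

lemma cinner_mat_adj: "cinner x (A *v y) = cinner (mat_adj A *v x) y"
  unfolding cinner_def matrix_vector_mult_def mat_adj_def mat_cnj_def transpose_def
  by (simp add: sum_distrib_left sum_distrib_right mult_ac) (rule sum.swap)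

lemma mat_adj_mult_component: "(mat_adj A ** B) $ i $ j = cinner (column i A) (column j B)"
  by (simp add: mat_adj_def mat_cnj_def transpose_def matrix_matrix_mult_def cinner_def column_def)

lemma matrix_vector_mult_scaleR: "A *v (c *\<^sub>R x) = c *\<^sub>R (A *v (x::complex^'n))"
  by (simp add: scaleR_eq_scalar_mult vec.scale)

lemma hermitian_inner_commute:
  assumes "mat_adj A = A"
  shows "inner x (A *v y) = inner (A *v x) y"
  by (metis Re_cinner assms cinner_mat_adj)

lemma hermitian_quadratic_form_add:
  assumes "mat_adj A = A"
  shows "inner (x + t *\<^sub>R y) (A *v (x + t *\<^sub>R y))
    = inner x (A *v x) + 2 * t * inner y (A *v x) + t\<^sup>2 * inner y (A *v y)"
  using hermitian_inner_commute[OF assms, of x y]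
  by (simp add: matrix_vector_mult_scaleR inner_commute
      algebra_simps power2_eq_square)

section \<open>Spectral theorem for Hermitian matrices\<close>

lemma linear_coeff_eq_0_if_quadratic_nonpos:
  fixes a b :: real
  assumes "\<And>t. 2 * t * a + t\<^sup>2 * b \<le> 0"
  shows "a = 0"
proof (rule ccontr)
  assume "a \<noteq> 0"
  define c where "c = \<bar>b\<bar> + 1"
  have "c > 0" "2 * c + b > 0"
    by (auto simp: c_def)
  then have "2 * (a / c) * a + (a / c)\<^sup>2 * b = (a / c)\<^sup>2 * (2 * c + b)"
    by (simp add: power2_eq_square field_simps)
  moreover have "(a / c)\<^sup>2 * (2 * c + b) > 0"
    using \<open>a \<noteq> 0\<close> \<open>c > 0\<close> \<open>2 * c + b > 0\<close> by simp
  ultimately show False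
    using assms[of "a / c"] by linarith
qed

text \<open>A maximiser of the Rayleigh quotient on an invariant subspace is an eigenvector: the
  first-order condition in the direction of any \<open>u \<in> M\<close> makes \<open>A w - l w\<close> orthogonal to \<open>M\<close>,
  and \<open>A w - l w\<close> itself lies in \<open>M\<close>.\<close>
lemma rayleigh_maximizer_eigenvector:
  fixes A :: "complex^'n^'n"
  assumes herm: "mat_adj A = A" and M: "subspace M" and inv: "\<And>x. x \<in> M \<Longrightarrow> A *v x \<in> M"
    and w: "w \<in> M" "norm w = 1"
    and max: "\<And>y. y \<in> M \<Longrightarrow> norm y = 1 \<Longrightarrow> inner y (A *v y) \<le> inner w (A *v w)"
  shows "A *v w = inner w (A *v w) *\<^sub>R w"
proof -
  define l where "l = inner w (A *v w)"
  have bound: "inner x (A *v x) \<le> l * (norm x)\<^sup>2" if "x \<in> M" for x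
  proof (cases "x = 0")
    case False
    have "inner (x /\<^sub>R norm x) (A *v (x /\<^sub>R norm x)) \<le> l"
      using max[of "x /\<^sub>R norm x"] M that False by (simp add: l_def subspace_scale)
    then show ?thesis
      using False by (simp add: matrix_vector_mult_scaleR power2_eq_square field_simps)
  qed simp
  have orth: "inner u (A *v w - l *\<^sub>R w) = 0" if u: "u \<in> M" for u
  proof -
    have "2 * t * inner u (A *v w - l *\<^sub>R w) + t\<^sup>2 * (inner u (A *v u) - l * (norm u)\<^sup>2) \<le> 0"
      for t
    proof -
      have "(norm (w + t *\<^sub>R u))\<^sup>2 = 1 + 2 * t * inner u w + t\<^sup>2 * (norm u)\<^sup>2"
        using w(2) unfolding power2_norm_eq_inner
        by (simp add: norm_eq_1 inner_commute algebra_simps power2_eq_square)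
      moreover have "w + t *\<^sub>R u \<in> M"
        using M u w by (simp add: subspace_add subspace_scale)
      ultimately show ?thesis
        using bound[of "w + t *\<^sub>R u"] hermitian_quadratic_form_add[OF herm, of w t u]
        by (simp add: l_def algebra_simps)
    qed
    then show ?thesis
      by (rule linear_coeff_eq_0_if_quadratic_nonpos)
  qed
  have "A *v w - l *\<^sub>R w \<in> M"
    using M inv w by (simp add: subspace_diff subspace_scale)
  then have "A *v w - l *\<^sub>R w = 0"
    using orth by (metis inner_eq_zero_iff)
  then show ?thesis
    by (simp add: l_def)
qed

lemma hermitian_eigenvector_in_invariant_subspace:
  fixes A :: "complex^'n^'n"
  assumes herm: "mat_adj A = A" and M: "subspace M" and inv: "\<And>x. x \<in> M \<Longrightarrow> A *v x \<in> M"
    and x: "x \<in> M" "x \<noteq> 0"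
  obtains w c where "w \<in> M" "norm w = 1" "A *v w = c *\<^sub>R w"
proof -
  define K where "K = sphere 0 1 \<inter> M"
  have "compact K"
    unfolding K_def using closed_subspace[OF M] by (intro compact_Int_closed) auto
  moreover have "x /\<^sub>R norm x \<in> K"
    using M x by (simp add: K_def subspace_scale)
  moreover have "continuous_on K (\<lambda>y. inner y (A *v y))"
    by (intro continuous_intros matrix_vector_mult_linear_continuous_on)
  ultimately obtain w where "w \<in> K" and "\<And>y. y \<in> K \<Longrightarrow> inner y (A *v y) \<le> inner w (A *v w)"
    using continuous_attains_sup[of K] by blast
  then have "w \<in> M" "norm w = 1" "A *v w = inner w (A *v w) *\<^sub>R w"
    using rayleigh_maximizer_eigenvector[OF herm M inv] by (auto simp: K_def)
  then show ?thesis
    by (rule that)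
qed

text \<open>Complex orthogonality to \<open>e\<close> is real orthogonality to both \<open>e\<close> and \<open>\<i> e\<close>, so this is a
  dimension count over the reals.\<close>
lemma exists_nonzero_cinner_orthogonal:
  fixes L :: "(complex^'n) list"
  assumes "length L < CARD('n)"
  obtains x where "x \<noteq> 0" "\<forall>e\<in>set L. cinner e x = 0"
proof -
  define T where "T = set L \<union> (\<lambda>e. \<i> *s e) ` set L"
  have "card T \<le> card (set L) + card ((\<lambda>e. \<i> *s e) ` set L)"
    unfolding T_def by (rule card_Un_le)
  also have "\<dots> \<le> 2 * length L"
    using card_image_le[of "set L" "\<lambda>e. \<i> *s e"] card_length[of L] by simp
  finally have "dim T < DIM(complex^'n)"
    using dim_le_card'[of T] assms by (simp add: T_def)
  then obtain x :: "complex^'n" where x: "x \<noteq> 0" "\<And>y. y \<in> span T \<Longrightarrow> orthogonal x y"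
    using orthogonal_to_subspace_exists by blast
  have "cinner e x = 0" if e: "e \<in> set L" for e
  proof -
    have "inner x e = 0" "inner x (\<i> *s e) = 0"
      using x(2) e by (auto simp: T_def orthogonal_def intro: span_base)
    then have "Re (cinner e x) = 0" "Re (cinner (\<i> *s e) x) = 0"
      by (simp_all add: Re_cinner inner_commute)
    then show ?thesis
      by (simp add: cinner_scalar_mult_left complex_eq_iff)
  qed
  then show ?thesis
    using that x(1) by blast
qed

text \<open>The orthogonal complement of finitely many eigenvectors is a real subspace that is invariant
  under a Hermitian matrix, so it contains a further eigenvector.\<close>
lemma hermitian_orthonormal_eigenvectors:
  fixes A :: "complex^'n^'n"
  assumes herm: "mat_adj A = A" and "k \<le> CARD('n)"
  shows "\<exists>L. length L = k \<and>
    (\<forall>i<k. \<forall>j<k. cinner (L ! i) (L ! j) = (if i = j then 1 else 0)) \<and>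
    (\<forall>i<k. \<exists>c. A *v (L ! i) = c *\<^sub>R (L ! i))"
  using assms(2)
proof (induction k)
  case (Suc k)
  then obtain L where L: "length L = k"
    "\<forall>i<k. \<forall>j<k. cinner (L ! i) (L ! j) = (if i = j then 1 else 0)"
    "\<forall>i<k. \<exists>c. A *v (L ! i) = c *\<^sub>R (L ! i)"
    by auto
  define M where "M = {x. \<forall>e\<in>set L. cinner e x = 0}"
  have M: "subspace M"
    by (auto simp: M_def subspace_def cinner_add_right cinner_scaleR_right cinner_def[of _ 0])
  have inv: "A *v x \<in> M" if "x \<in> M" for x
  proof -
    have "cinner e (A *v x) = 0" if "e \<in> set L" for e
    proof -
      obtain c where "A *v e = c *\<^sub>R e"
        using L(1,3) \<open>e \<in> set L\<close> by (metis in_set_conv_nth)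
      then show ?thesis
        using \<open>x \<in> M\<close> \<open>e \<in> set L\<close> herm
        by (simp add: cinner_mat_adj scaleR_eq_scalar_mult cinner_scalar_mult_left M_def)
    qed
    then show ?thesis
      by (simp add: M_def)
  qed
  obtain x where "x \<noteq> 0" "x \<in> M"
    using exists_nonzero_cinner_orthogonal[of L] L(1) Suc.prems by (auto simp: M_def)
  then obtain w c where w: "w \<in> M" "norm w = 1" "A *v w = c *\<^sub>R w"
    using hermitian_eigenvector_in_invariant_subspace[OF herm M inv] by blast
  have "cinner w w = 1"
    using w(2) by (simp add: cinner_self)
  moreover have "cinner e w = 0" "cinner w e = 0" if "e \<in> set L" for e
    using w(1) that cinner_commute[of w e] by (simp_all add: M_def)
  ultimately show ?case
    using L w(3)
    by (intro exI[of _ "L @ [w]"]) (auto simp: nth_append less_Suc_eq)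
qed simp

lemma hermitian_unitarily_diagonalizable:
  fixes A :: "complex^'n^'n"
  assumes herm: "mat_adj A = A"
  obtains V d where "unitary_mat V" "A ** V = V ** diag_mat d"
proof -
  obtain L where L: "length L = CARD('n)"
    "\<forall>i<CARD('n). \<forall>j<CARD('n). cinner (L ! i) (L ! j) = (if i = j then 1 else 0)"
    "\<forall>i<CARD('n). \<exists>c. A *v (L ! i) = c *\<^sub>R (L ! i)"
    using hermitian_orthonormal_eigenvectors[OF herm, of "CARD('n)"] by auto
  obtain h :: "'n \<Rightarrow> nat" where h: "bij_betw h UNIV {0..<CARD('n)}"
    using ex_bij_betw_finite_nat[of "UNIV :: 'n set"] by auto
  then have h_less: "h j < CARD('n)" and h_eq: "h i = h j \<longleftrightarrow> i = j" for i j
    by (auto simp: bij_betw_def inj_on_def)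
  have "\<forall>j. \<exists>c. A *v (L ! h j) = c *\<^sub>R (L ! h j)"
    using L(3) h_less by blast
  then obtain d where d: "\<And>j. A *v (L ! h j) = d j *\<^sub>R (L ! h j)"
    by metis
  define V :: "complex^'n^'n" where "V = (\<chi> r j. (L ! h j) $ r)"
  have column_V: "column j V = L ! h j" for j
    by (simp add: V_def column_def vec_eq_iff)
  have "mat_adj V ** V = mat 1"
    using L(2) h_less h_eq by (simp add: vec_eq_iff mat_def mat_adj_mult_component column_V)
  moreover have "A ** V = V ** diag_mat d"
  proof -
    have "(A ** V) $ r $ j = (A *v (L ! h j)) $ r" for r j
      by (simp add: V_def matrix_matrix_mult_def matrix_vector_mult_def)
    then show ?thesis
      by (simp add: vec_eq_iff matrix_mul_diag_mat_right V_def d vector_scaleR_complex_component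
          mult.commute del: vector_scaleR_component)
  qed
  ultimately show ?thesis
    using that unitary_mat_iff_left_inverse by blast
qed

section \<open>Singular value decomposition of an invertible matrix\<close>

lemma gram_diag_mat_pos:
  fixes C :: "complex^'n^'n"
  assumes "mat_adj C ** C = diag_mat d" and "invertible C"
  shows "d j > 0"
proof -
  have "complex_of_real (d j) = complex_of_real ((norm (column j C))\<^sup>2)"
    using arg_cong[OF assms(1), of "\<lambda>X. X $ j $ j"]
    by (simp add: mat_adj_mult_component cinner_self diag_mat_def)
  then have d: "d j = (norm (column j C))\<^sup>2"
    using of_real_eq_iff by blast
  obtain B where "B ** C = mat 1"
    using assms(2) invertible_def by blast
  have "column j C \<noteq> 0"
  proof
    assume "column j C = 0"
    then have "(B ** C) $ j $ j = 0"
      by (simp add: matrix_matrix_mult_def column_def vec_eq_iff)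
    then show False
      using \<open>B ** C = mat 1\<close> by (simp add: mat_def)
  qed
  then show ?thesis
    by (simp add: d)
qed

lemma invertible_svd:
  fixes b :: "complex^'n^'n"
  assumes "invertible b"
  obtains U V s where "unitary_mat U" "unitary_mat V" "\<forall>i. s i > 0" "b = U ** diag_mat s ** mat_adj V"
proof -
  have "mat_adj (mat_adj b ** b) = mat_adj b ** b"
    by (simp add: mat_normalize_simps)
  then obtain V d where V: "unitary_mat V" and HV: "mat_adj b ** b ** V = V ** diag_mat d"
    using hermitian_unitarily_diagonalizable by blast
  note V' = unitary_matD[OF V]
  define C where "C = b ** V"
  have CC: "mat_adj C ** C = diag_mat d"
    using HV V' by (simp add: C_def mat_normalize_simps)
      (metis matrix_mul_assoc mat_adj_def matrix_mul_lid)
  have "invertible C"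
    unfolding C_def using assms unitary_mat_invertible(1)[OF V] by (rule invertible_mult)
  then have d: "d j > 0" for j
    using CC gram_diag_mat_pos by blast
  define s where "s j = sqrt (d j)" for j
  have s: "\<forall>j. s j > 0" and ss: "(\<lambda>j. s j * s j) = d"
    using d by (simp_all add: s_def abs_of_pos fun_eq_iff)
  define U where "U = C ** diag_mat (\<lambda>j. inverse (s j))"
  have "mat_adj U ** U = diag_mat (\<lambda>j. inverse (s j)) ** (mat_adj C ** C) ** diag_mat (\<lambda>j. inverse (s j))"
    by (simp add: U_def mat_normalize_simps)
  also have "\<dots> = diag_mat (\<lambda>j. inverse (s j)) ** diag_mat d ** diag_mat (\<lambda>j. inverse (s j))"
    by (simp only: CC)
  also have "\<dots> = mat 1"
  proof -
    have "inverse (s j) * (s j * s j) * inverse (s j) = 1" for j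
      using s by (simp add: field_simps less_imp_neq[symmetric])
    then show ?thesis
      by (simp add: diag_mat_mult diag_mat_1 flip: ss)
  qed
  finally have U: "unitary_mat U"
    by (simp add: unitary_mat_iff_left_inverse)
  have "U ** diag_mat s ** mat_adj V
      = b ** (V ** (diag_mat (\<lambda>j. inverse (s j)) ** diag_mat s) ** mat_adj V)"
    by (simp add: U_def C_def matrix_mul_assoc)
  also have "\<dots> = b"
    using s V' diag_mat_mult_inverse(2)[of s] by (simp add: less_imp_neq[symmetric])
  finally show ?thesis
    using that U V s by metis
qed

lemma symmetric_unitary_commute_diag_mat_iff:
  fixes W :: "complex^'n^'n"
  assumes s: "\<forall>i. s i > 0"
  shows "(mat_cnj W ** transpose W = mat 1 \<and>
          transpose W ** (diag_mat s ** diag_mat s) ** mat_cnj W = diag_mat s ** diag_mat s \<and>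
          transpose W = W)
    \<longleftrightarrow> unitary_mat W \<and> transpose W = W \<and> W ** diag_mat s = diag_mat s ** W"
proof (cases "transpose W = W")
  case True
  have commute: "W ** (diag_mat s ** diag_mat s) ** mat_cnj W = diag_mat s ** diag_mat s
      \<longleftrightarrow> W ** diag_mat s = diag_mat s ** W"
    if "mat_cnj W ** W = mat 1"
  proof -
    have "W ** mat_cnj W = mat 1"
      using that matrix_left_right_inverse by blast
    then show ?thesis
      using conjugate_eq_iff_commute[OF _ that] commute_diag_mat_square_iff[OF s]
      by (simp add: diag_mat_mult)
  qed
  show ?thesis
    using True commute unfolding symmetric_unitary_mat_iff[OF True] by (simp only:) blast
qed simp

lemma exists_middle_factor:
  fixes U V z :: "complex^'n^'n"
  assumes "unitary_mat U" and "unitary_mat V" and "\<forall>i. s i \<noteq> 0"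
  obtains W where "z = U ** diag_mat s ** W ** transpose V"
proof
  let ?W = "diag_mat (\<lambda>i. inverse (s i)) ** mat_adj U ** z ** mat_cnj V"
  have "U ** diag_mat s ** ?W ** transpose V
      = (U ** (diag_mat s ** diag_mat (\<lambda>i. inverse (s i))) ** mat_adj U) ** z ** (mat_cnj V ** transpose V)"
    by (simp add: matrix_mul_assoc)
  also have "\<dots> = z"
    using assms diag_mat_mult_inverse(1)[of s] unitary_matD[OF assms(1)] unitary_matD[OF assms(2)]
    by simp
  finally show "z = U ** diag_mat s ** ?W ** transpose V" ..
qed

lemma factorized_conditions_iff:
  fixes U V W :: "complex^'n^'n"
  assumes U: "unitary_mat U" and V: "unitary_mat V" and s: "\<forall>i. s i > 0"
    and b: "b = U ** diag_mat s ** mat_adj V" and z: "z = U ** diag_mat s ** W ** transpose V"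
  shows "(mat_cnj z ** transpose z = mat_cnj b ** transpose b \<and>
          transpose z ** mat_cnj z = mat_adj b ** b \<and>
          b ** transpose z = z ** transpose b)
    \<longleftrightarrow> unitary_mat W \<and> transpose W = W \<and> W ** diag_mat s = diag_mat s ** W"
proof -
  let ?S = "diag_mat s"
  note U' = unitary_matD[OF U] and V' = unitary_matD[OF V]
  have S: "invertible ?S"
    using s invertible_diag_mat by (metis less_irrefl)
  have "mat_cnj z ** transpose z = (mat_cnj U ** ?S) ** (mat_cnj W ** transpose W) ** (?S ** transpose U)"
    "mat_cnj b ** transpose b = (mat_cnj U ** ?S) ** mat 1 ** (?S ** transpose U)"
    using V' by (simp_all add: b z mat_normalize_simps matrix_mul_cancel_right_inverse)
  moreover have "invertible (mat_cnj U ** ?S)" "invertible (?S ** transpose U)"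
    using S unitary_mat_invertible[OF U] by (simp_all add: invertible_mult)
  ultimately have 1: "mat_cnj z ** transpose z = mat_cnj b ** transpose b
      \<longleftrightarrow> mat_cnj W ** transpose W = mat 1"
    by (simp only: invertible_mult_cancel)
  have "transpose z ** mat_cnj z = V ** (transpose W ** (?S ** ?S) ** mat_cnj W) ** mat_adj V"
    "mat_adj b ** b = V ** (?S ** ?S) ** mat_adj V"
    using U' by (simp_all add: b z mat_normalize_simps matrix_mul_cancel_right_inverse)
  then have 2: "transpose z ** mat_cnj z = mat_adj b ** b
      \<longleftrightarrow> transpose W ** (?S ** ?S) ** mat_cnj W = ?S ** ?S"
    by (simp only: invertible_mult_cancel[OF unitary_mat_invertible(1,2)[OF V]])
  have "b ** transpose z = (U ** ?S) ** transpose W ** (?S ** transpose U)"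
    "z ** transpose b = (U ** ?S) ** W ** (?S ** transpose U)"
    using V' by (simp_all add: b z mat_normalize_simps matrix_mul_cancel_right_inverse)
  moreover have "invertible (U ** ?S)" "invertible (?S ** transpose U)"
    using S unitary_mat_invertible[OF U] by (simp_all add: invertible_mult)
  ultimately have 3: "b ** transpose z = z ** transpose b \<longleftrightarrow> transpose W = W"
    by (simp only: invertible_mult_cancel)
  show ?thesis
    unfolding 1 2 3 using s by (rule symmetric_unitary_commute_diag_mat_iff)
qed

theorem lemma9:
  fixes z b :: "complex^'n^'n"
  assumes "invertible z" and "invertible b"
  shows "(mat_cnj z ** transpose z = mat_cnj b ** transpose b \<and>
          transpose z ** mat_cnj z = mat_adj b ** b \<and>
          b ** transpose z = z ** transpose b)
     \<longleftrightarrow> (\<exists>S U V W :: complex^'n^'n.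
            pos_real_diag S \<and> unitary_mat U \<and> unitary_mat V \<and> unitary_mat W \<and>
            transpose W = W \<and> W ** S = S ** W \<and>
            b = U ** S ** mat_adj V \<and> z = U ** S ** W ** transpose V)"
    (is "?conditions \<longleftrightarrow> ?factorization")
proof
  assume ?conditions
  obtain U V s where U: "unitary_mat U" and V: "unitary_mat V" and s: "\<forall>i. s i > 0"
    and b: "b = U ** diag_mat s ** mat_adj V"
    using invertible_svd[OF assms(2)] by blast
  obtain W where z: "z = U ** diag_mat s ** W ** transpose V"
    using exists_middle_factor[OF U V] s by (metis less_irrefl)
  have "unitary_mat W \<and> transpose W = W \<and> W ** diag_mat s = diag_mat s ** W"
    using factorized_conditions_iff[OF U V s b z] \<open>?conditions\<close> by (rule iffD1)
  then show ?factorization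
    using pos_real_diag_diag_mat[OF s] U V b z by blast
next
  assume ?factorization
  then obtain S U V W where S: "pos_real_diag S" and U: "unitary_mat U" and V: "unitary_mat V"
    and W: "unitary_mat W \<and> transpose W = W \<and> W ** S = S ** W"
    and b: "b = U ** S ** mat_adj V" and z: "z = U ** S ** W ** transpose V"
    by blast
  obtain s where s: "\<forall>i. s i > 0" and S: "S = diag_mat s"
    using pos_real_diagE[OF S] .
  have "unitary_mat W \<and> transpose W = W \<and> W ** diag_mat s = diag_mat s ** W"
    using W by (simp only: S)
  then show ?conditions
    by (rule iffD2[OF factorized_conditions_iff[OF U V s b[unfolded S] z[unfolded S]]])
qed

end
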